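(* Let $(\Omega,\mathcal F,\mathbb P)$ be a probability space and let $\mathcal X$ be an ideal of $L^0$, equipped with a vector topology and the almost-sure order. Let $V_1:\mathbb R^N\to\mathcal X$ be weakly upper semicontinuous, and assume one of the following: (i) $\mathcal X=L^0$ equipped with the topology of convergence in probability; (ii) $\mathcal X$ is order continuous and $V_1$ is nondecreasing (componentwise order on $\mathbb R^N$, almost-sure order on $\mathcal X$). Then $V_1$ is upper semicontinuous.
   Context: $L^0$ is the space of equivalence classes (modulo a.s. equality) of real random variables on $(\Omega,\mathcal F,\mathbb P)$ with the a.s. partial order, $\mathcal X_+$ being the a.s. nonnegative elements. $\mathcal X\subset L^0$ is an ideal if it is a linear subspace that is solid ($X\in\mathcal X$ whenever $|X|\le|Y|$ a.s. for some $Y\in\mathcal X$) and $\max\{X,Y\}\in\mathcal X$ for all $X,Y\in\mathcal X$. $\mathcal X$ is order continuous if for all $(X_n)\subset\mathcal X$ and $X\in\mathcal X$ with $X_n\to X$ a.s. and $\sup_n|X_n|\in\mathcal X$, one has $X_n\to X$ in the topology of $\mathcal X$. $V_1$ is weakly upper semicontinuous if for all $(x_n)\subset\mathbb R^N$, $x\in\mathbb R^N$ with $x_n\to x$, $V_1(x)\ge\limsup_n V_1(x_n)$ a.s. $V_1$ is upper semicontinuous at $x$ if for every neighborhood $\mathcal U$ of $V_1(x)$ there exists a neighborhood $\mathcal V$ of $x$ with $V_1(\mathcal V)\subset\mathcal U-\mathcal X_+$, and upper semicontinuous if this holds at every $x$. *)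

theory Defs
  imports "HOL-Probability.Probability"
begin

text \<open>Elements of L^0 are represented by measurable real functions on the sample space;
  a.s. equality / order are expressed with AE. A set X of such functions is an
  ideal of L^0; a topology T on X is a topology on the quotient L^0/a.s., i.e. its
  open sets are saturated w.r.t. a.s. equality.\<close>

definition is_L0_ideal :: "'a measure \<Rightarrow> ('a \<Rightarrow> real) set \<Rightarrow> bool" where
  "is_L0_ideal M X \<longleftrightarrow>
     X \<subseteq> borel_measurable M \<and>
     (\<lambda>\<omega>. 0) \<in> X \<and>
     (\<forall>f\<in>X. \<forall>g\<in>X. (\<lambda>\<omega>. f \<omega> + g \<omega>) \<in> X) \<and>
     (\<forall>c::real. \<forall>f\<in>X. (\<lambda>\<omega>. c * f \<omega>) \<in> X) \<and>
     (\<forall>f\<in>borel_measurable M. \<forall>g\<in>X. (AE \<omega> in M. \<bar>f \<omega>\<bar> \<le> \<bar>g \<omega>\<bar>) \<longrightarrow> f \<in> X) \<and>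
     (\<forall>f\<in>X. \<forall>g\<in>X. (\<lambda>\<omega>. max (f \<omega>) (g \<omega>)) \<in> X)"

definition L0_vector_topology :: "'a measure \<Rightarrow> ('a \<Rightarrow> real) set \<Rightarrow> ('a \<Rightarrow> real) topology \<Rightarrow> bool" where
  "L0_vector_topology M X T \<longleftrightarrow>
     topspace T = X \<and>
     (\<forall>U f g. openin T U \<longrightarrow> f \<in> U \<longrightarrow> g \<in> X \<longrightarrow> (AE \<omega> in M. f \<omega> = g \<omega>) \<longrightarrow> g \<in> U) \<and>
     continuous_map (prod_topology T T) T (\<lambda>(f, g). (\<lambda>\<omega>. f \<omega> + g \<omega>)) \<and>
     continuous_map (prod_topology euclideanreal T) T (\<lambda>(c, f). (\<lambda>\<omega>. c * f \<omega>))"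

definition prob_dist :: "'a measure \<Rightarrow> ('a \<Rightarrow> real) \<Rightarrow> ('a \<Rightarrow> real) \<Rightarrow> real" where
  "prob_dist M f g = (\<integral>\<omega>. min \<bar>f \<omega> - g \<omega>\<bar> 1 \<partial>M)"

definition conv_in_prob_topology :: "'a measure \<Rightarrow> ('a \<Rightarrow> real) topology" where
  "conv_in_prob_topology M = topology (\<lambda>U. U \<subseteq> borel_measurable M \<and>
     (\<forall>f\<in>U. \<exists>e>0. \<forall>g\<in>borel_measurable M. prob_dist M f g < e \<longrightarrow> g \<in> U))"

definition L0_order_continuous :: "'a measure \<Rightarrow> ('a \<Rightarrow> real) set \<Rightarrow> ('a \<Rightarrow> real) topology \<Rightarrow> bool" where
  "L0_order_continuous M X T \<longleftrightarrow>
     (\<forall>Xs Y. (\<forall>n. Xs n \<in> X) \<longrightarrow> Y \<in> X \<longrightarrow>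
        (AE \<omega> in M. (\<lambda>n. Xs n \<omega>) \<longlonglongrightarrow> Y \<omega>) \<longrightarrow>
        (AE \<omega> in M. bdd_above (range (\<lambda>n. \<bar>Xs n \<omega>\<bar>))) \<longrightarrow>
        (\<lambda>\<omega>. SUP n. \<bar>Xs n \<omega>\<bar>) \<in> X \<longrightarrow>
        limitin T Xs Y sequentially)"

definition weakly_usc :: "'a measure \<Rightarrow> (real^'n \<Rightarrow> 'a \<Rightarrow> real) \<Rightarrow> bool" where
  "weakly_usc M V \<longleftrightarrow>
     (\<forall>xs x. xs \<longlonglongrightarrow> x \<longrightarrow>
        (AE \<omega> in M. limsup (\<lambda>n. ereal (V (xs n) \<omega>)) \<le> ereal (V x \<omega>)))"

definition nondecreasing_L0 :: "'a measure \<Rightarrow> (real^'n \<Rightarrow> 'a \<Rightarrow> real) \<Rightarrow> bool" where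
  "nondecreasing_L0 M V \<longleftrightarrow>
     (\<forall>x y. (\<forall>i. x $ i \<le> y $ i) \<longrightarrow> (AE \<omega> in M. V x \<omega> \<le> V y \<omega>))"

definition usc_at :: "'a measure \<Rightarrow> ('a \<Rightarrow> real) set \<Rightarrow> ('a \<Rightarrow> real) topology \<Rightarrow>
    (real^'n \<Rightarrow> 'a \<Rightarrow> real) \<Rightarrow> real^'n \<Rightarrow> bool" where
  "usc_at M X T V x \<longleftrightarrow>
     (\<forall>U. openin T U \<longrightarrow> V x \<in> U \<longrightarrow>
        (\<exists>W. open W \<and> x \<in> W \<and>
           (\<forall>y\<in>W. \<exists>u\<in>U. \<exists>p\<in>X. (AE \<omega> in M. 0 \<le> p \<omega>) \<and>
                (AE \<omega> in M. V y \<omega> = u \<omega> - p \<omega>))))"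

definition usc_L0 :: "'a measure \<Rightarrow> ('a \<Rightarrow> real) set \<Rightarrow> ('a \<Rightarrow> real) topology \<Rightarrow>
    (real^'n \<Rightarrow> 'a \<Rightarrow> real) \<Rightarrow> bool" where
  "usc_L0 M X T V \<longleftrightarrow> (\<forall>x. usc_at M X T V x)"

end

theory Submission
  imports Defs
begin

text \<open>Both cases reduce upper semicontinuity at \<open>x\<close> to finding, for each open \<open>U \<ni> V x\<close>,
  elements of \<open>U\<close> dominating \<open>V y\<close> for all \<open>y\<close> near \<open>x\<close>; the difference is then the required
  nonnegative element of the ideal. Weak upper semicontinuity says exactly that
  \<open>max (V y) (V x) \<rightarrow> V x\<close> almost surely as \<open>y \<rightarrow> x\<close>. In convergence in probability this
  a.s. convergence is already topological convergence, by dominated convergence. In an order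
  continuous ideal it is too once the sequence is dominated; monotonicity of \<open>V\<close> supplies both
  the domination and, along \<open>z\<^sub>n = x + (1/(n+1), \<dots>, 1/(n+1))\<close>, a single \<open>z\<^sub>N\<close> lying above a
  whole neighbourhood of \<open>x\<close>.\<close>

lemma limsup_le_imp_tendsto_max_diff_0:
  assumes "limsup (\<lambda>n. ereal (a n)) \<le> ereal b"
  shows "(\<lambda>n. max (a n - b) 0) \<longlonglongrightarrow> 0"
proof (rule order_tendstoI)
  fix c :: real assume "c < 0"
  then show "\<forall>\<^sub>F n in sequentially. c < max (a n - b) 0" by (auto intro!: always_eventually)
next
  fix c :: real assume c: "0 < c"
  have "limsup (\<lambda>n. ereal (a n)) < ereal (b + c)"
    using assms c by (auto intro: le_less_trans)
  then have "\<forall>\<^sub>F n in sequentially. ereal (a n) < ereal (b + c)" by (rule Limsup_lessD)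
  then show "\<forall>\<^sub>F n in sequentially. max (a n - b) 0 < c"
    by eventually_elim (use c in auto)
qed

lemma L0_ideal_add:
  "is_L0_ideal M X \<Longrightarrow> f \<in> X \<Longrightarrow> g \<in> X \<Longrightarrow> (\<lambda>\<omega>. f \<omega> + g \<omega>) \<in> X"
  unfolding is_L0_ideal_def by blast

lemma L0_ideal_solid:
  "is_L0_ideal M X \<Longrightarrow> f \<in> borel_measurable M \<Longrightarrow> g \<in> X \<Longrightarrow>
    (AE \<omega> in M. \<bar>f \<omega>\<bar> \<le> \<bar>g \<omega>\<bar>) \<Longrightarrow> f \<in> X"
  unfolding is_L0_ideal_def by blast

lemma L0_ideal_measurable: "is_L0_ideal M X \<Longrightarrow> f \<in> X \<Longrightarrow> f \<in> borel_measurable M"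
  unfolding is_L0_ideal_def by blast

lemma L0_ideal_diff:
  assumes "is_L0_ideal M X" "f \<in> X" "g \<in> X"
  shows "(\<lambda>\<omega>. f \<omega> - g \<omega>) \<in> X"
proof -
  have "(\<lambda>\<omega>. (-1) * g \<omega>) \<in> X" using assms(1,3) unfolding is_L0_ideal_def by blast
  from L0_ideal_add[OF assms(1,2) this] show ?thesis by simp
qed

lemma L0_ideal_abs:
  assumes "is_L0_ideal M X" "f \<in> X"
  shows "(\<lambda>\<omega>. \<bar>f \<omega>\<bar>) \<in> X"
proof -
  have "(\<lambda>\<omega>. \<bar>f \<omega>\<bar>) \<in> borel_measurable M"
    using L0_ideal_measurable[OF assms] by measurable
  from L0_ideal_solid[OF assms(1) this assms(2)] show ?thesis by simp
qed

lemma is_L0_ideal_borel_measurable: "is_L0_ideal M (borel_measurable M)"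
  unfolding is_L0_ideal_def by (intro conjI ballI allI impI subset_refl; measurable)

lemma usc_atI_dominated:
  assumes ideal: "is_L0_ideal M X" and VX: "\<And>y. V y \<in> X"
    and dominated: "\<And>U. openin T U \<Longrightarrow> V x \<in> U \<Longrightarrow>
      \<forall>\<^sub>F y in nhds x. \<exists>u\<in>U \<inter> X. AE \<omega> in M. V y \<omega> \<le> u \<omega>"
  shows "usc_at M X T V x"
  unfolding usc_at_def
proof (intro allI impI)
  fix U assume "openin T U" "V x \<in> U"
  from dominated[OF this] obtain W where W: "open W" "x \<in> W"
    and dom: "\<And>y. y \<in> W \<Longrightarrow> \<exists>u\<in>U \<inter> X. AE \<omega> in M. V y \<omega> \<le> u \<omega>"
    unfolding eventually_nhds by blast
  have "\<exists>u\<in>U. \<exists>p\<in>X. (AE \<omega> in M. 0 \<le> p \<omega>) \<and> (AE \<omega> in M. V y \<omega> = u \<omega> - p \<omega>)"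
    if "y \<in> W" for y
  proof -
    obtain u where u: "u \<in> U" "u \<in> X" and le: "AE \<omega> in M. V y \<omega> \<le> u \<omega>"
      using dom[OF \<open>y \<in> W\<close>] by blast
    have "(\<lambda>\<omega>. u \<omega> - V y \<omega>) \<in> X" using L0_ideal_diff[OF ideal u(2) VX] .
    moreover have "AE \<omega> in M. 0 \<le> u \<omega> - V y \<omega>" using le by eventually_elim simp
    ultimately show ?thesis using u(1) by (intro bexI[of _ u] bexI[of _ "\<lambda>\<omega>. u \<omega> - V y \<omega>"]) auto
  qed
  then show "\<exists>W. open W \<and> x \<in> W \<and> (\<forall>y\<in>W. \<exists>u\<in>U. \<exists>p\<in>X. (AE \<omega> in M. 0 \<le> p \<omega>) \<and>
      (AE \<omega> in M. V y \<omega> = u \<omega> - p \<omega>))"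
    using W by blast
qed

lemma openin_conv_in_prob_topology:
  "openin (conv_in_prob_topology M) U \<longleftrightarrow> U \<subseteq> borel_measurable M \<and>
     (\<forall>f\<in>U. \<exists>e>0. \<forall>g\<in>borel_measurable M. prob_dist M f g < e \<longrightarrow> g \<in> U)"
proof -
  let ?open = "\<lambda>U. U \<subseteq> borel_measurable M \<and>
     (\<forall>f\<in>U. \<exists>e>0. \<forall>g\<in>borel_measurable M. prob_dist M f g < e \<longrightarrow> g \<in> U)"
  have inter: "?open (S \<inter> S')" if S: "?open S" and S': "?open S'" for S S'
  proof -
    have "\<exists>e>0. \<forall>g\<in>borel_measurable M. prob_dist M f g < e \<longrightarrow> g \<in> S \<inter> S'"
      if "f \<in> S \<inter> S'" for f
    proof -
      from that S obtain e where "e > 0" "\<forall>g\<in>borel_measurable M. prob_dist M f g < e \<longrightarrow> g \<in> S"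
        by auto
      moreover from that S' obtain e' where
        "e' > 0" "\<forall>g\<in>borel_measurable M. prob_dist M f g < e' \<longrightarrow> g \<in> S'"
        by auto
      ultimately show ?thesis by (intro exI[of _ "min e e'"]) auto
    qed
    with S show ?thesis by auto
  qed
  have union: "?open (\<Union>K)" if "\<forall>S\<in>K. ?open S" for K
    using that by fastforce
  have "istopology ?open"
    unfolding istopology_def using inter union by blast
  then show ?thesis unfolding conv_in_prob_topology_def by simp
qed

lemma limitin_conv_in_prob_topologyI:
  assumes "f \<in> borel_measurable M" "\<And>n. g n \<in> borel_measurable M"
    and "(\<lambda>n. prob_dist M f (g n)) \<longlonglongrightarrow> 0"
  shows "limitin (conv_in_prob_topology M) g f sequentially"
  unfolding limitin_def
proof (intro conjI allI impI)
  have "openin (conv_in_prob_topology M) (borel_measurable M)"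
    unfolding openin_conv_in_prob_topology by (auto intro!: exI[of _ 1])
  then show "f \<in> topspace (conv_in_prob_topology M)" using assms(1) openin_subset by blast
next
  fix U assume "openin (conv_in_prob_topology M) U \<and> f \<in> U"
  then obtain e where "e > 0" and e: "\<And>g. g \<in> borel_measurable M \<Longrightarrow> prob_dist M f g < e \<Longrightarrow> g \<in> U"
    unfolding openin_conv_in_prob_topology by blast
  from order_tendstoD(2)[OF assms(3) \<open>e > 0\<close>]
  show "\<forall>\<^sub>F n in sequentially. g n \<in> U"
    by eventually_elim (use e assms(2) in blast)
qed

lemma tendsto_prob_dist_max_of_limsup_le:
  assumes "prob_space M" "f \<in> borel_measurable M" "\<And>n. g n \<in> borel_measurable M"
    and limsup: "AE \<omega> in M. limsup (\<lambda>n. ereal (g n \<omega>)) \<le> ereal (f \<omega>)"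
  shows "(\<lambda>n. prob_dist M f (\<lambda>\<omega>. max (g n \<omega>) (f \<omega>))) \<longlonglongrightarrow> 0"
proof -
  interpret prob_space M by fact
  have "(\<lambda>n. \<integral>\<omega>. min \<bar>f \<omega> - max (g n \<omega>) (f \<omega>)\<bar> 1 \<partial>M) \<longlonglongrightarrow> (\<integral>\<omega>. 0 \<partial>M)"
  proof (rule integral_dominated_convergence[where w="\<lambda>_. 1"])
    show "AE \<omega> in M. (\<lambda>n. min \<bar>f \<omega> - max (g n \<omega>) (f \<omega>)\<bar> 1) \<longlonglongrightarrow> 0"
      using limsup
    proof eventually_elim
      case (elim \<omega>)
      have "(\<lambda>n. min (max (g n \<omega> - f \<omega>) 0) 1) \<longlonglongrightarrow> min 0 1"
        by (intro tendsto_min limsup_le_imp_tendsto_max_diff_0 elim tendsto_const)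
      moreover have "min \<bar>f \<omega> - max (g n \<omega>) (f \<omega>)\<bar> 1 = min (max (g n \<omega> - f \<omega>) 0) 1" for n
        by auto
      ultimately show ?case by simp
    qed
  qed (use assms(2,3) in auto)
  then show ?thesis unfolding prob_dist_def by simp
qed

lemma usc_L0_conv_in_prob:
  assumes "prob_space M" "weakly_usc M V" "\<And>y. V y \<in> borel_measurable M"
  shows "usc_L0 M (borel_measurable M) (conv_in_prob_topology M) V"
  unfolding usc_L0_def
proof (intro allI usc_atI_dominated[OF is_L0_ideal_borel_measurable assms(3)])
  fix x U assume U: "openin (conv_in_prob_topology M) U" "V x \<in> U"
  show "\<forall>\<^sub>F y in nhds x. \<exists>u\<in>U \<inter> borel_measurable M. AE \<omega> in M. V y \<omega> \<le> u \<omega>"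
    unfolding eventually_nhds_iff_sequentially
  proof (intro allI impI)
    fix y assume "y \<longlonglongrightarrow> x"
    define u where "u n = (\<lambda>\<omega>. max (V (y n) \<omega>) (V x \<omega>))" for n
    have u_meas: "u n \<in> borel_measurable M" for n unfolding u_def using assms(3) by measurable
    have "AE \<omega> in M. limsup (\<lambda>n. ereal (V (y n) \<omega>)) \<le> ereal (V x \<omega>)"
      using assms(2) \<open>y \<longlonglongrightarrow> x\<close> unfolding weakly_usc_def by blast
    then have "limitin (conv_in_prob_topology M) u (V x) sequentially"
      using assms(3) u_meas tendsto_prob_dist_max_of_limsup_le[OF assms(1,3,3)]
      unfolding u_def by (intro limitin_conv_in_prob_topologyI)
    with U have "\<forall>\<^sub>F n in sequentially. u n \<in> U" unfolding limitin_def by blast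
    then show "\<forall>\<^sub>F n in sequentially. \<exists>u\<in>U \<inter> borel_measurable M. AE \<omega> in M. V (y n) \<omega> \<le> u \<omega>"
    proof eventually_elim
      case (elim n)
      have "AE \<omega> in M. V (y n) \<omega> \<le> u n \<omega>" by (simp add: u_def)
      with elim u_meas show ?case by blast
    qed
  qed
qed

lemma limitin_order_continuous_dominated:
  assumes oc: "L0_order_continuous M X T" and ideal: "is_L0_ideal M X"
    and u: "\<And>n. u n \<in> X" and "Y \<in> X" "B \<in> X"
    and bound: "\<And>n \<omega>. \<bar>u n \<omega>\<bar> \<le> B \<omega>"
    and lim: "AE \<omega> in M. (\<lambda>n. u n \<omega>) \<longlonglongrightarrow> Y \<omega>"
  shows "limitin T u Y sequentially"
proof -
  have bdd: "bdd_above (range (\<lambda>n. \<bar>u n \<omega>\<bar>))" for \<omega>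
    using bound by (intro bdd_aboveI2)
  have "u n \<in> borel_measurable M" for n using L0_ideal_measurable[OF ideal u] .
  then have "(\<lambda>\<omega>. SUP n. \<bar>u n \<omega>\<bar>) \<in> borel_measurable M"
    using bdd by (intro borel_measurable_cSUP) auto
  moreover have "\<bar>SUP n. \<bar>u n \<omega>\<bar>\<bar> \<le> \<bar>B \<omega>\<bar>" for \<omega>
  proof -
    have "0 \<le> \<bar>u 0 \<omega>\<bar>" by simp
    also have "\<dots> \<le> (SUP n. \<bar>u n \<omega>\<bar>)" by (rule cSUP_upper[OF UNIV_I bdd])
    finally have "0 \<le> (SUP n. \<bar>u n \<omega>\<bar>)" .
    moreover have "(SUP n. \<bar>u n \<omega>\<bar>) \<le> B \<omega>" using bound by (intro cSUP_least) auto
    ultimately show ?thesis by simp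
  qed
  ultimately have "(\<lambda>\<omega>. SUP n. \<bar>u n \<omega>\<bar>) \<in> X"
    using L0_ideal_solid[OF ideal _ \<open>B \<in> X\<close>] by simp
  with u \<open>Y \<in> X\<close> lim bdd show ?thesis
    using oc[unfolded L0_order_continuous_def, rule_format] by simp
qed

lemma eventually_nhds_le_plus:
  fixes x :: "real^'n"
  assumes "e > 0"
  shows "\<forall>\<^sub>F y in nhds x. \<forall>i. y $ i \<le> x $ i + e"
  unfolding eventually_nhds
proof (intro exI conjI ballI allI)
  fix y i assume "y \<in> ball x e"
  have "\<bar>(y - x) $ i\<bar> \<le> norm (y - x)" by (rule component_le_norm_cart)
  also have "\<dots> < e" using \<open>y \<in> ball x e\<close> by (simp add: dist_norm norm_minus_commute)
  finally show "y $ i \<le> x $ i + e" by simp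
qed (use assms in auto)

lemma usc_L0_order_continuous_mono:
  assumes ideal: "is_L0_ideal M X" and VX: "\<And>y. V y \<in> X" and "weakly_usc M V"
    and oc: "L0_order_continuous M X T" and mono: "nondecreasing_L0 M V"
  shows "usc_L0 M X T V"
  unfolding usc_L0_def
proof (intro allI usc_atI_dominated[OF ideal VX])
  fix x U assume U: "openin T U" "V x \<in> U"
  define z where "z n = x + (\<chi> i. inverse (real (Suc n)))" for n
  have z_le_z0: "AE \<omega> in M. V (z n) \<omega> \<le> V (z 0) \<omega>" for n
    using mono unfolding nondecreasing_L0_def by (simp add: z_def inverse_le_1_iff)
  have "z \<longlonglongrightarrow> x"
  proof (rule vec_tendstoI)
    fix i
    have "(\<lambda>n. x $ i + inverse (real (Suc n))) \<longlonglongrightarrow> x $ i + 0"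
      by (intro tendsto_add tendsto_const LIMSEQ_inverse_real_of_nat)
    then show "(\<lambda>n. z n $ i) \<longlonglongrightarrow> x $ i" by (simp add: z_def)
  qed
  then have limsup: "AE \<omega> in M. limsup (\<lambda>n. ereal (V (z n) \<omega>)) \<le> ereal (V x \<omega>)"
    using \<open>weakly_usc M V\<close> unfolding weakly_usc_def by blast
  \<comment> \<open>Capping by \<open>max (V (z 0)) (V x)\<close> changes \<open>u n\<close> only on a null set, but makes the
    bound by \<open>B\<close> hold everywhere, as order continuity requires.\<close>
  define u where "u n = (\<lambda>\<omega>. min (max (V (z n) \<omega>) (V x \<omega>)) (max (V (z 0) \<omega>) (V x \<omega>)))" for n
  define B where "B = (\<lambda>\<omega>. \<bar>V (z 0) \<omega>\<bar> + \<bar>V x \<omega>\<bar>)"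
  have "B \<in> X" unfolding B_def by (intro L0_ideal_add[OF ideal] L0_ideal_abs[OF ideal] VX)
  have bound: "\<bar>u n \<omega>\<bar> \<le> B \<omega>" for n \<omega> unfolding u_def B_def by auto
  have u_X: "u n \<in> X" for n
  proof -
    have "V y \<in> borel_measurable M" for y using L0_ideal_measurable[OF ideal VX] .
    then have "u n \<in> borel_measurable M" unfolding u_def by measurable
    moreover have "AE \<omega> in M. \<bar>u n \<omega>\<bar> \<le> \<bar>B \<omega>\<bar>"
      using bound by (intro AE_I2) (meson abs_ge_self order_trans)
    ultimately show ?thesis using L0_ideal_solid[OF ideal _ \<open>B \<in> X\<close>] by blast
  qed
  have "AE \<omega> in M. \<forall>n. V (z n) \<omega> \<le> V (z 0) \<omega>"
    using z_le_z0 by (simp add: AE_all_countable)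
  with limsup have "AE \<omega> in M. (\<lambda>n. u n \<omega>) \<longlonglongrightarrow> V x \<omega>"
  proof eventually_elim
    case (elim \<omega>)
    have "(\<lambda>n. V x \<omega> + max (V (z n) \<omega> - V x \<omega>) 0) \<longlonglongrightarrow> V x \<omega> + 0"
      by (intro tendsto_add tendsto_const limsup_le_imp_tendsto_max_diff_0 elim)
    moreover have "u n \<omega> = V x \<omega> + max (V (z n) \<omega> - V x \<omega>) 0" for n
      using elim(2)[rule_format, of n] unfolding u_def by (auto simp: max_def min_def)
    ultimately show ?case by simp
  qed
  with u_X VX \<open>B \<in> X\<close> bound have "limitin T u (V x) sequentially"
    by (intro limitin_order_continuous_dominated[OF oc ideal])
  with U obtain N where "u N \<in> U" unfolding limitin_def eventually_sequentially by blast
  have "\<forall>\<^sub>F y in nhds x. \<forall>i. y $ i \<le> x $ i + inverse (real (Suc N))"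
    by (rule eventually_nhds_le_plus) simp
  then show "\<forall>\<^sub>F y in nhds x. \<exists>u\<in>U \<inter> X. AE \<omega> in M. V y \<omega> \<le> u \<omega>"
  proof eventually_elim
    case (elim y)
    then have "AE \<omega> in M. V y \<omega> \<le> V (z N) \<omega>"
      using mono unfolding nondecreasing_L0_def z_def by simp
    then have "AE \<omega> in M. V y \<omega> \<le> u N \<omega>"
      using z_le_z0[of N] by eventually_elim (auto simp: u_def)
    with \<open>u N \<in> U\<close> u_X show ?case by blast
  qed
qed

theorem mainTheorem12:
  fixes M :: "'a measure" and X :: "('a \<Rightarrow> real) set" and T :: "('a \<Rightarrow> real) topology"
    and V :: "real^'n \<Rightarrow> 'a \<Rightarrow> real"
  assumes "prob_space M"
    and "is_L0_ideal M X"
    and "L0_vector_topology M X T"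
    and "\<forall>x. V x \<in> X"
    and "weakly_usc M V"
    and "(X = borel_measurable M \<and> T = conv_in_prob_topology M)
         \<or> (L0_order_continuous M X T \<and> nondecreasing_L0 M V)"
  shows "usc_L0 M X T V"
  using assms(6)
proof
  assume "X = borel_measurable M \<and> T = conv_in_prob_topology M"
  with assms(1,4,5) show ?thesis by (auto intro: usc_L0_conv_in_prob)
next
  assume "L0_order_continuous M X T \<and> nondecreasing_L0 M V"
  with assms(2,4,5) show ?thesis by (auto intro: usc_L0_order_continuous_mono)
qed

end
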